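(* With notation as in the context, for every $i\in\mathbb Z$ the set $\mathcal B_i$ is a self-adjoint ideal of $\mathcal B_0$, the maps $\varphi_i\colon\mathcal B_{-i}\to\mathcal B_i$, $\varphi_i(b)=s^ib\,s^{-i}$, are $*$-isomorphisms, and $\varphi=(\{\mathcal B_i\},\{\varphi_i\})$ is a partial action of $\mathbb Z$ on $\mathcal B_0$. Moreover $\mathcal B=\bigoplus_{i\in\mathbb Z}\mathcal B_it^i$, and the map $$\Psi\colon\mathcal B_0\rtimes_\varphi\mathbb Z\to\mathcal B,\qquad \Psi\Big(\sum_ib_i\delta_i\Big)=\sum_ib_is^i=\sum_ib_it^i\quad(b_i\in\mathcal B_i)$$ is a $*$-isomorphism.
   Context: Let $X$ be a totally disconnected compact metrizable space, $T$ a homeomorphism of $X$, $K$ a field with involution, $C_K(X)$ the $*$-algebra of locally constant functions $X\to K$, and $\mathcal A=C_K(X)\rtimes_T\mathbb Z$ the algebraic crossed product (finite sums $\sum f_it^i$, $tf=(f\circ T^{-1})t$, $(ft^i)^*=t^{-i}f^*$, $t^{-1}=t^*$). Let $E$ be a nonempty clopen set, $\mathcal P$ a partition of $X\setminus E$ (finite family of nonempty pairwise disjoint clopen sets with union $X\setminus E$), $\mathcal B$ the unital $*$-subalgebra of $\mathcal A$ generated by $\{\chi_Zt:Z\in\mathcal P\}$, and $\mathcal B_0=C_K(X)\cap\mathcal B$. Put $s=\chi_{X\setminus E}t$, $s^0=1$, and for $i>0$, $s^{-i}:=(t^{-1}\chi_{X\setminus E})^i=(s^* )^i$. For $i>0$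 let $\mathcal B_i=\chi_{X\setminus(E\cup T(E)\cup\cdots\cup T^{i-1}(E))}\mathcal B_0$ and $\mathcal B_{-i}=\chi_{X\setminus(T^{-1}(E)\cup\cdots\cup T^{-i}(E))}\mathcal B_0$. A partial action of $\mathbb Z$ on a $*$-algebra $A$ is a family of self-adjoint ideals $A_n$ ($A_0=A$) and $*$-isomorphisms $\phi_n\colon A_{-n}\to A_n$ with $\phi_0=\mathrm{id}$ and $\phi_{n+m}$ extending $\phi_n\circ\phi_m$ (on its natural domain). The partial crossed product $A\rtimes_\phi\mathbb Z$ is the $*$-algebra of finite sums $\sum_na_n\delta_n$, $a_n\in A_n$, with product $(a_n\delta_n)(b_m\delta_m)=\phi_n(\phi_{-n}(a_n)b_m)\delta_{n+m}$ and involution $(a_n\delta_n)^*=\phi_{-n}(a_n^* )\delta_{-n}$. *)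

theory Defs
  imports "HOL-Analysis.Analysis"
begin

definition totally_disconnected_space :: "'x::topological_space itself \<Rightarrow> bool" where
  "totally_disconnected_space _ \<longleftrightarrow> (\<forall>S::'x set. connected S \<longrightarrow> (\<exists>a. S \<subseteq> {a}))"

definition clopen_set :: "'x::topological_space set \<Rightarrow> bool" where
  "clopen_set S \<longleftrightarrow> open S \<and> closed S"

definition field_involution :: "('k::field \<Rightarrow> 'k) \<Rightarrow> bool" where
  "field_involution kst \<longleftrightarrow>
     (\<forall>a b. kst (a + b) = kst a + kst b) \<and> (\<forall>a b. kst (a * b) = kst a * kst b) \<and>
     kst 1 = 1 \<and> (\<forall>a. kst (kst a) = a)"

definition loc_const :: "('x::topological_space \<Rightarrow> 'k) \<Rightarrow> bool" where
  "loc_const f \<longleftrightarrow> (\<forall>x. \<exists>U. open U \<and> x \<in> U \<and> (\<forall>y\<in>U. f y = f x))"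

definition Tpow :: "('x \<Rightarrow> 'x) \<Rightarrow> int \<Rightarrow> 'x \<Rightarrow> 'x" where
  "Tpow T i = (if 0 \<le> i then T ^^ nat i else inv T ^^ nat (- i))"

text \<open>An element \<open>\<Sum>\<^sub>i f\<^sub>i t\<^sup>i\<close> is represented by its coefficient function \<open>i \<mapsto> f\<^sub>i\<close>.\<close>

definition supp :: "(int \<Rightarrow> 'x \<Rightarrow> 'k::zero) \<Rightarrow> int set" where
  "supp a = {n. a n \<noteq> (\<lambda>_. 0)}"

definition CP :: "(int \<Rightarrow> 'x::topological_space \<Rightarrow> 'k::field) set" where
  "CP = {a. finite (supp a) \<and> (\<forall>n. loc_const (a n))}"

definition cp_add :: "(int \<Rightarrow> 'x \<Rightarrow> 'k::field) \<Rightarrow> (int \<Rightarrow> 'x \<Rightarrow> 'k) \<Rightarrow> int \<Rightarrow> 'x \<Rightarrow> 'k" where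
  "cp_add a b = (\<lambda>n x. a n x + b n x)"

definition cp_smult :: "'k::field \<Rightarrow> (int \<Rightarrow> 'x \<Rightarrow> 'k) \<Rightarrow> int \<Rightarrow> 'x \<Rightarrow> 'k" where
  "cp_smult c a = (\<lambda>n x. c * a n x)"

definition cp_one :: "int \<Rightarrow> 'x \<Rightarrow> 'k::field" where
  "cp_one = (\<lambda>n x. if n = 0 then 1 else 0)"

definition cp_monom :: "int \<Rightarrow> ('x \<Rightarrow> 'k::field) \<Rightarrow> int \<Rightarrow> 'x \<Rightarrow> 'k" where
  "cp_monom i f = (\<lambda>n. if n = i then f else (\<lambda>_. 0))"

text \<open>Product: \<open>(f t\<^sup>i)(g t\<^sup>j) = f (g \<circ> T\<^sup>-\<^sup>i) t\<^sup>i\<^sup>+\<^sup>j\<close>, from \<open>t f = (f \<circ> T\<^sup>-\<^sup>1) t\<close>.\<close>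
definition cp_mult :: "('x \<Rightarrow> 'x) \<Rightarrow> (int \<Rightarrow> 'x \<Rightarrow> 'k::field) \<Rightarrow> (int \<Rightarrow> 'x \<Rightarrow> 'k) \<Rightarrow> int \<Rightarrow> 'x \<Rightarrow> 'k" where
  "cp_mult T a b = (\<lambda>n x. \<Sum>i\<in>supp a. a i x * b (n - i) (Tpow T (- i) x))"

text \<open>Involution: \<open>(f t\<^sup>i)\<^sup>* = t\<^sup>-\<^sup>i f\<^sup>* = (f\<^sup>* \<circ> T\<^sup>i) t\<^sup>-\<^sup>i\<close>, where \<open>f\<^sup>* = kst \<circ> f\<close>.\<close>
definition cp_star :: "('k::field \<Rightarrow> 'k) \<Rightarrow> ('x \<Rightarrow> 'x) \<Rightarrow> (int \<Rightarrow> 'x \<Rightarrow> 'k) \<Rightarrow> int \<Rightarrow> 'x \<Rightarrow> 'k" where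
  "cp_star kst T a = (\<lambda>n x. kst (a (- n) (Tpow T (- n) x)))"

inductive_set gen_alg :: "('k::field \<Rightarrow> 'k) \<Rightarrow> ('x \<Rightarrow> 'x) \<Rightarrow> (int \<Rightarrow> 'x \<Rightarrow> 'k) set \<Rightarrow> (int \<Rightarrow> 'x \<Rightarrow> 'k) set"
  for kst T G where
  gen: "g \<in> G \<Longrightarrow> g \<in> gen_alg kst T G"
| one: "cp_one \<in> gen_alg kst T G"
| add: "a \<in> gen_alg kst T G \<Longrightarrow> b \<in> gen_alg kst T G \<Longrightarrow> cp_add a b \<in> gen_alg kst T G"
| smult: "a \<in> gen_alg kst T G \<Longrightarrow> cp_smult c a \<in> gen_alg kst T G"
| mult: "a \<in> gen_alg kst T G \<Longrightarrow> b \<in> gen_alg kst T G \<Longrightarrow> cp_mult T a b \<in> gen_alg kst T G"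
| star: "a \<in> gen_alg kst T G \<Longrightarrow> cp_star kst T a \<in> gen_alg kst T G"

definition Balg :: "('k::field \<Rightarrow> 'k) \<Rightarrow> ('x \<Rightarrow> 'x) \<Rightarrow> 'x set set \<Rightarrow> (int \<Rightarrow> 'x \<Rightarrow> 'k) set" where
  "Balg kst T P = gen_alg kst T {cp_monom 1 (indicator Z) | Z. Z \<in> P}"

text \<open>\<open>\<B>\<^sub>0 = C_K(X) \<inter> \<B>\<close>, viewed as a set of functions X \<rightarrow> K.\<close>
definition B0 :: "('k::field \<Rightarrow> 'k) \<Rightarrow> ('x \<Rightarrow> 'x) \<Rightarrow> 'x set set \<Rightarrow> ('x \<Rightarrow> 'k) set" where
  "B0 kst T P = {f. cp_monom 0 f \<in> Balg kst T P}"

text \<open>\<open>W\<^sub>i = X \ (E \<union> \<dots> \<union> T\<^sup>i\<^sup>-\<^sup>1(E))\<close> for i > 0, \<open>X \ (T\<^sup>-\<^sup>1(E) \<union> \<dots> \<union> T\<^sup>i(E))\<close> for i < 0, \<open>W\<^sub>0 = X\<close>.\<close>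
definition Wset :: "('x \<Rightarrow> 'x) \<Rightarrow> 'x set \<Rightarrow> int \<Rightarrow> 'x set" where
  "Wset T E i = - (\<Union>k\<in>{k. (0 \<le> k \<and> k < i) \<or> (i \<le> k \<and> k < 0)}. Tpow T k ` E)"

definition Bi :: "('k::field \<Rightarrow> 'k) \<Rightarrow> ('x \<Rightarrow> 'x) \<Rightarrow> 'x set set \<Rightarrow> 'x set \<Rightarrow> int \<Rightarrow> ('x \<Rightarrow> 'k) set" where
  "Bi kst T P E i = {(\<lambda>x. indicator (Wset T E i) x * f x) | f. f \<in> B0 kst T P}"

definition sgen :: "'x set \<Rightarrow> int \<Rightarrow> 'x \<Rightarrow> 'k::field" where
  "sgen E = cp_monom 1 (indicator (- E))"

definition spow :: "('k::field \<Rightarrow> 'k) \<Rightarrow> ('x \<Rightarrow> 'x) \<Rightarrow> 'x set \<Rightarrow> int \<Rightarrow> int \<Rightarrow> 'x \<Rightarrow> 'k" where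
  "spow kst T E i = (if 0 \<le> i then (cp_mult T (sgen E) ^^ nat i) cp_one
                     else (cp_mult T (cp_star kst T (sgen E)) ^^ nat (- i)) cp_one)"

text \<open>\<open>\<phi>\<^sub>i(b) = s\<^sup>i b s\<^sup>-\<^sup>i\<close> (its degree-0 coefficient; that the product lies in degree 0 is part of the claim).\<close>
definition phi :: "('k::field \<Rightarrow> 'k) \<Rightarrow> ('x \<Rightarrow> 'x) \<Rightarrow> 'x set \<Rightarrow> int \<Rightarrow> ('x \<Rightarrow> 'k) \<Rightarrow> 'x \<Rightarrow> 'k" where
  "phi kst T E i b = cp_mult T (cp_mult T (spow kst T E i) (cp_monom 0 b)) (spow kst T E (- i)) 0"

definition fstar :: "('k \<Rightarrow> 'k) \<Rightarrow> ('x \<Rightarrow> 'k) \<Rightarrow> 'x \<Rightarrow> 'k" where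
  "fstar kst f = (\<lambda>x. kst (f x))"

definition sa_ideal :: "('k::field \<Rightarrow> 'k) \<Rightarrow> ('x \<Rightarrow> 'k) set \<Rightarrow> ('x \<Rightarrow> 'k) set \<Rightarrow> bool" where
  "sa_ideal kst A J \<longleftrightarrow> J \<subseteq> A \<and> (\<lambda>_. 0) \<in> J \<and>
     (\<forall>f\<in>J. \<forall>g\<in>J. (\<lambda>x. f x + g x) \<in> J) \<and>
     (\<forall>c. \<forall>f\<in>J. (\<lambda>x. c * f x) \<in> J) \<and>
     (\<forall>a\<in>A. \<forall>f\<in>J. (\<lambda>x. a x * f x) \<in> J \<and> (\<lambda>x. f x * a x) \<in> J) \<and>
     (\<forall>f\<in>J. fstar kst f \<in> J)"

definition star_iso :: "('k::field \<Rightarrow> 'k) \<Rightarrow> ('x \<Rightarrow> 'k) set \<Rightarrow> ('x \<Rightarrow> 'k) set \<Rightarrow> (('x \<Rightarrow> 'k) \<Rightarrow> ('x \<Rightarrow> 'k)) \<Rightarrow> bool" where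
  "star_iso kst I J h \<longleftrightarrow> bij_betw h I J \<and>
     (\<forall>f\<in>I. \<forall>g\<in>I. h (\<lambda>x. f x + g x) = (\<lambda>x. h f x + h g x)) \<and>
     (\<forall>f\<in>I. \<forall>g\<in>I. h (\<lambda>x. f x * g x) = (\<lambda>x. h f x * h g x)) \<and>
     (\<forall>c. \<forall>f\<in>I. h (\<lambda>x. c * f x) = (\<lambda>x. c * h f x)) \<and>
     (\<forall>f\<in>I. h (fstar kst f) = fstar kst (h f))"

definition partial_action ::
  "('k::field \<Rightarrow> 'k) \<Rightarrow> ('x \<Rightarrow> 'k) set \<Rightarrow> (int \<Rightarrow> ('x \<Rightarrow> 'k) set) \<Rightarrow> (int \<Rightarrow> ('x \<Rightarrow> 'k) \<Rightarrow> ('x \<Rightarrow> 'k)) \<Rightarrow> bool" where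
  "partial_action kst A I ph \<longleftrightarrow>
     I 0 = A \<and> (\<forall>n. sa_ideal kst A (I n)) \<and>
     (\<forall>n. star_iso kst (I (- n)) (I n) (ph n)) \<and>
     (\<forall>f\<in>A. ph 0 f = f) \<and>
     (\<forall>n m f. f \<in> I (- m) \<and> ph m f \<in> I (- n) \<longrightarrow>
        f \<in> I (- (n + m)) \<and> ph (n + m) f = ph n (ph m f))"

text \<open>\<open>\<Sum>\<^sub>n a\<^sub>n \<delta>\<^sub>n\<close> is represented by \<open>n \<mapsto> a\<^sub>n\<close>.\<close>
definition PCP :: "(int \<Rightarrow> ('x \<Rightarrow> 'k::field) set) \<Rightarrow> (int \<Rightarrow> 'x \<Rightarrow> 'k) set" where
  "PCP I = {a. finite (supp a) \<and> (\<forall>n. a n \<in> I n)}"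

definition pcp_mult :: "(int \<Rightarrow> ('x \<Rightarrow> 'k) \<Rightarrow> ('x \<Rightarrow> 'k)) \<Rightarrow> (int \<Rightarrow> 'x \<Rightarrow> 'k::field) \<Rightarrow> (int \<Rightarrow> 'x \<Rightarrow> 'k) \<Rightarrow> int \<Rightarrow> 'x \<Rightarrow> 'k" where
  "pcp_mult ph a b = (\<lambda>k x. \<Sum>n\<in>supp a. ph n (\<lambda>y. ph (- n) (a n) y * b (k - n) y) x)"

definition pcp_star :: "('k::field \<Rightarrow> 'k) \<Rightarrow> (int \<Rightarrow> ('x \<Rightarrow> 'k) \<Rightarrow> ('x \<Rightarrow> 'k)) \<Rightarrow> (int \<Rightarrow> 'x \<Rightarrow> 'k) \<Rightarrow> int \<Rightarrow> 'x \<Rightarrow> 'k" where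
  "pcp_star kst ph a = (\<lambda>n. ph n (fstar kst (a (- n))))"

definition Psi :: "('k::field \<Rightarrow> 'k) \<Rightarrow> ('x \<Rightarrow> 'x) \<Rightarrow> 'x set \<Rightarrow> (int \<Rightarrow> 'x \<Rightarrow> 'k) \<Rightarrow> int \<Rightarrow> 'x \<Rightarrow> 'k" where
  "Psi kst T E a = (\<lambda>n x. \<Sum>i\<in>supp a. cp_mult T (cp_monom 0 (a i)) (spow kst T E i) n x)"

end

theory Submission
  imports Defs
begin

text \<open>
  Let \<open>W\<^sub>i\<close> be the set of points whose orbit under \<open>T\<^sup>-\<^sup>1\<close> (for \<open>i > 0\<close>) or under \<open>T\<close>
  (for \<open>i < 0\<close>) avoids \<open>E\<close> during the \<open>|i|\<close> steps between \<open>0\<close> and \<open>i\<close>. These sets form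
  a cocycle: \<open>W\<^sub>i \<inter> T\<^sup>i(W\<^sub>j) \<subseteq> W\<^sub>i\<^sub>+\<^sub>j\<close>, with equality when \<open>i\<close> and \<open>j\<close> have the same
  sign. Since \<open>s = \<chi>\<^sub>X\<^sub>-\<^sub>E t\<close>, this gives \<open>s\<^sup>i = \<chi>\<^sub>W\<^sub>i t\<^sup>i\<close> for every \<open>i \<in> \<int>\<close>, hence
  \<open>\<phi>\<^sub>i(b) = \<chi>\<^sub>W\<^sub>i \<cdot> (b \<circ> T\<^sup>-\<^sup>i)\<close>, and the ideal, *-isomorphism and partial-action
  properties become pointwise computations with the cocycle.

  By induction over the generation of \<open>\<B>\<close>, the \<open>i\<close>-th coefficient of every element of
  \<open>\<B>\<close> vanishes off \<open>W\<^sub>i\<close> and every homogeneous component lies again in \<open>\<B>\<close>.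
  Multiplication by \<open>s\<^sup>i\<close> and \<open>s\<^sup>-\<^sup>i\<close> moves such a component between degree \<open>0\<close> and
  degree \<open>i\<close>, which yields \<open>\<B> = \<Oplus>\<^sub>i \<B>\<^sub>i t\<^sup>i\<close>. On this graded subspace the product and
  involution of the partial crossed product coincide with those of the crossed product,
  so \<open>\<Psi>\<close> is the identity map.
\<close>

lemma Tpow_0 [simp]: "Tpow T 0 = id"
  by (simp add: Tpow_def fun_eq_iff)

lemma Tpow_1 [simp]: "Tpow T 1 x = T x"
  by (simp add: Tpow_def)

lemma Tpow_minus_1 [simp]: "Tpow T (- 1) x = inv T x"
  by (simp add: Tpow_def)

lemma Tpow_plus_1:
  assumes "bij T"
  shows "Tpow T (i + 1) x = T (Tpow T i x)"
proof -
  consider "0 \<le> i" | "i = - 1" | "i < - 1" by linarith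
  then show ?thesis
  proof cases
    case 1
    then have "nat (i + 1) = Suc (nat i)" by simp
    with 1 show ?thesis by (simp add: Tpow_def)
  next
    case 2
    then show ?thesis using surj_f_inv_f[OF bij_is_surj[OF assms]] by simp
  next
    case 3
    then have "nat (- i) = Suc (nat (- (i + 1)))" by simp
    with 3 show ?thesis using surj_f_inv_f[OF bij_is_surj[OF assms]] by (simp add: Tpow_def)
  qed
qed

lemma Tpow_add:
  assumes "bij T"
  shows "Tpow T (i + j) x = Tpow T i (Tpow T j x)"
proof (induction i rule: int_induct[where k = 0])
  case (step1 i)
  then show ?case
    using Tpow_plus_1[OF assms, of i] Tpow_plus_1[OF assms, of "i + j"] by (simp add: add_ac)
next
  case (step2 i)
  then have "T (Tpow T (i - 1 + j) x) = T (Tpow T (i - 1) (Tpow T j x))"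
    using Tpow_plus_1[OF assms, of "i - 1"] Tpow_plus_1[OF assms, of "i - 1 + j"]
    by (simp add: algebra_simps)
  then show ?case
    using bij_is_inj[OF assms] by (simp add: inj_eq)
qed simp

lemma Tpow_minus_cancel [simp]:
  assumes "bij T"
  shows "Tpow T i (Tpow T (- i) x) = x" and "Tpow T (- i) (Tpow T i x) = x"
  using Tpow_add[OF assms, of i "- i" x] Tpow_add[OF assms, of "- i" i x] by simp_all

lemma continuous_on_funpow:
  fixes f :: "'a::topological_space \<Rightarrow> 'a"
  shows "continuous_on UNIV f \<Longrightarrow> continuous_on UNIV (f ^^ n)"
proof (induction n)
  case (Suc n)
  then show ?case
    using continuous_on_compose[of UNIV "f ^^ n" f] by (simp add: continuous_on_subset)
qed (simp add: continuous_on_id)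

lemma continuous_on_Tpow:
  "continuous_on UNIV T \<Longrightarrow> continuous_on UNIV (inv T) \<Longrightarrow> continuous_on UNIV (Tpow T k)"
  by (simp add: Tpow_def continuous_on_funpow)

definition window :: "int \<Rightarrow> int set" where
  "window i = {k. (0 \<le> k \<and> k < i) \<or> (i \<le> k \<and> k < 0)}"

lemma window_add_subset: "window (i + j) \<subseteq> window i \<union> (+) i ` window j"
proof
  fix k assume "k \<in> window (i + j)"
  then have "k \<in> window i \<or> k - i \<in> window j" by (auto simp: window_def)
  then show "k \<in> window i \<union> (+) i ` window j" by force
qed

lemma window_add_same_sign:
  "0 \<le> i * j \<Longrightarrow> window (i + j) = window i \<union> (+) i ` window j"
  using window_add_subset[of i j] zero_le_mult_iff[of i j] by (auto simp: window_def)

lemma window_uminus: "window i = (+) i ` window (- i)"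
proof -
  have "k \<in> window i \<longleftrightarrow> k - i \<in> window (- i)" for k by (auto simp: window_def)
  then show ?thesis by (force simp: image_iff)
qed

lemma mem_Wset_iff:
  assumes "bij T"
  shows "x \<in> Wset T E i \<longleftrightarrow> (\<forall>k\<in>window i. Tpow T (- k) x \<notin> E)"
proof -
  have "x \<in> Tpow T k ` E \<longleftrightarrow> Tpow T (- k) x \<in> E" for k
    using Tpow_minus_cancel[OF assms] by (metis image_eqI imageE)
  then show ?thesis by (auto simp: Wset_def window_def)
qed

lemma Wset_0 [simp]: "Wset T E 0 = UNIV"
  by (auto simp: Wset_def)

lemma mem_Wset_1:
  assumes "bij T"
  shows "x \<in> Wset T E 1 \<longleftrightarrow> x \<notin> E"
proof -
  have "window 1 = {0}" by (auto simp: window_def)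
  then show ?thesis by (simp add: mem_Wset_iff[OF assms])
qed

lemma mem_Wset_minus_1:
  assumes "bij T"
  shows "x \<in> Wset T E (- 1) \<longleftrightarrow> T x \<notin> E"
proof -
  have "window (- 1) = {- 1}" by (auto simp: window_def)
  then show ?thesis by (simp add: mem_Wset_iff[OF assms])
qed

lemma Tpow_mem_Wset_iff:
  assumes "bij T"
  shows "Tpow T (- i) x \<in> Wset T E (- i) \<longleftrightarrow> x \<in> Wset T E i"
proof -
  have "Tpow T (- k) (Tpow T (- i) x) = Tpow T (- (i + k)) x" for k
    using Tpow_add[OF assms, of "- k" "- i" x] by (simp add: add_ac)
  then show ?thesis
    unfolding mem_Wset_iff[OF assms] window_uminus[of i] by simp
qed

lemma Wset_add_iff:
  assumes "bij T" and "0 \<le> i * j"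
  shows "x \<in> Wset T E (i + j) \<longleftrightarrow> x \<in> Wset T E i \<and> Tpow T (- i) x \<in> Wset T E j"
proof -
  have "Tpow T (- i - k) x = Tpow T (- k) (Tpow T (- i) x)" for k
    using Tpow_add[OF assms(1), of "- k" "- i" x] by (simp add: algebra_simps)
  then show ?thesis
    unfolding mem_Wset_iff[OF assms(1)] window_add_same_sign[OF assms(2)] by (simp add: ball_Un)
qed

lemma Wset_cocycle:
  assumes "bij T" and "x \<in> Wset T E i" and "Tpow T (- i) x \<in> Wset T E j"
  shows "x \<in> Wset T E (i + j)"
proof -
  have "Tpow T (- i - k) x = Tpow T (- k) (Tpow T (- i) x)" for k
    using Tpow_add[OF assms(1), of "- k" "- i" x] by (simp add: algebra_simps)
  then show ?thesis
    using assms(2,3) window_add_subset[of i j] unfolding mem_Wset_iff[OF assms(1)] by fastforce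
qed

lemma loc_const_iff_eventually: "loc_const f \<longleftrightarrow> (\<forall>x. \<forall>\<^sub>F y in nhds x. f y = f x)"
  by (simp add: loc_const_def eventually_nhds)

lemma loc_const_const: "loc_const (\<lambda>_. c)"
  by (simp add: loc_const_iff_eventually)

lemma loc_const_compose2:
  "loc_const f \<Longrightarrow> loc_const g \<Longrightarrow> loc_const (\<lambda>x. h (f x) (g x))"
  unfolding loc_const_iff_eventually
proof (intro allI impI)
  fix x
  assume "\<forall>x. \<forall>\<^sub>F y in nhds x. f y = f x" and "\<forall>x. \<forall>\<^sub>F y in nhds x. g y = g x"
  then have "\<forall>\<^sub>F y in nhds x. f y = f x" and "\<forall>\<^sub>F y in nhds x. g y = g x" by blast+
  then show "\<forall>\<^sub>F y in nhds x. h (f y) (g y) = h (f x) (g x)"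
    by eventually_elim simp
qed

lemma loc_const_compose: "loc_const f \<Longrightarrow> loc_const (\<lambda>x. h (f x))"
  using loc_const_compose2[of f f "\<lambda>a _. h a"] by simp

lemma loc_const_sum:
  "finite I \<Longrightarrow> (\<And>i. i \<in> I \<Longrightarrow> loc_const (f i)) \<Longrightarrow> loc_const (\<lambda>x. \<Sum>i\<in>I. f i x)"
proof (induction I rule: finite_induct)
  case (insert i I)
  then show ?case
    using loc_const_compose2[of "f i" "\<lambda>x. \<Sum>i\<in>I. f i x" "(+)"] by simp
qed (simp add: loc_const_const)

lemma loc_const_comp_continuous:
  assumes "loc_const f" and "continuous_on UNIV g"
  shows "loc_const (\<lambda>x. f (g x))"
  unfolding loc_const_def
proof
  fix x
  obtain U where U: "open U" "g x \<in> U" "\<forall>y\<in>U. f y = f (g x)"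
    using assms(1) unfolding loc_const_def by blast
  have "open (g -` U)" using open_vimage[OF U(1) assms(2)] .
  with U show "\<exists>V. open V \<and> x \<in> V \<and> (\<forall>y\<in>V. f (g y) = f (g x))"
    by blast
qed

lemma loc_const_indicator:
  assumes "clopen_set Z"
  shows "loc_const (indicator Z)"
  unfolding loc_const_def
proof
  fix x
  show "\<exists>U. open U \<and> x \<in> U \<and> (\<forall>y\<in>U. indicator Z y = indicator Z x)"
  proof (cases "x \<in> Z")
    case True
    then show ?thesis using assms by (intro exI[of _ Z]) (simp add: clopen_set_def)
  next
    case False
    then show ?thesis using assms by (intro exI[of _ "- Z"]) (simp add: clopen_set_def open_Compl)
  qed
qed

lemma supp_cp_monom: "supp (cp_monom i f) = (if f = (\<lambda>_. 0) then {} else {i})"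
  by (auto simp: supp_def cp_monom_def)

lemma cp_monom_zero [simp]: "cp_monom i (\<lambda>_. 0) = (\<lambda>_ _. 0)"
  by (auto simp: cp_monom_def)

lemma cp_one_eq_cp_monom: "cp_one = cp_monom 0 (\<lambda>_. 1)"
  by (auto simp: cp_one_def cp_monom_def)

lemma cp_mult_cp_monom_left:
  "cp_mult T (cp_monom i f) b = (\<lambda>n x. f x * b (n - i) (Tpow T (- i) x))"
proof (cases "f = (\<lambda>_. 0)")
  case False
  then have "supp (cp_monom i f) = {i}" by (simp add: supp_cp_monom)
  then show ?thesis unfolding cp_mult_def by (simp add: cp_monom_def)
qed (simp add: cp_mult_def supp_cp_monom)

lemma cp_mult_cp_monom:
  "cp_mult T (cp_monom i f) (cp_monom j g) = cp_monom (i + j) (\<lambda>x. f x * g (Tpow T (- i) x))"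
  unfolding cp_mult_cp_monom_left by (auto simp: cp_monom_def fun_eq_iff)

lemma cp_star_cp_monom:
  "kst 0 = 0 \<Longrightarrow> cp_star kst T (cp_monom i f) = cp_monom (- i) (\<lambda>x. kst (f (Tpow T i x)))"
  by (auto simp: cp_star_def cp_monom_def fun_eq_iff)

lemma sum_cp_monom_coeffs:
  assumes "finite (supp a)"
  shows "(\<lambda>n x. \<Sum>i\<in>supp a. cp_monom i (a i) n x) = a"
proof (intro ext)
  fix n x
  have "(\<Sum>i\<in>supp a. cp_monom i (a i) n x) = (\<Sum>i\<in>supp a. if i = n then a n x else 0)"
    by (rule sum.cong) (auto simp: cp_monom_def)
  also have "\<dots> = a n x"
    using assms by (simp add: sum.delta' supp_def)
  finally show "(\<Sum>i\<in>supp a. cp_monom i (a i) n x) = a n x" .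
qed

lemma cp_add_cp_monom: "cp_add (cp_monom i f) (cp_monom i g) = cp_monom i (\<lambda>x. f x + g x)"
  by (auto simp: cp_add_def cp_monom_def fun_eq_iff)

lemma cp_smult_cp_monom: "cp_smult c (cp_monom i f) = cp_monom i (\<lambda>x. c * f x)"
  by (auto simp: cp_smult_def cp_monom_def fun_eq_iff)

lemma cp_monom_coeff_cp_monom:
  "cp_monom i (cp_monom j f i) = (if i = j then cp_monom j f else (\<lambda>_ _. 0))"
  by (auto simp: cp_monom_def fun_eq_iff)

lemma cp_monom_coeff_cp_add:
  "cp_monom i (cp_add a b i) = cp_add (cp_monom i (a i)) (cp_monom i (b i))"
  by (auto simp: cp_monom_def cp_add_def fun_eq_iff)

lemma cp_monom_coeff_cp_smult: "cp_monom i (cp_smult c a i) = cp_smult c (cp_monom i (a i))"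
  by (auto simp: cp_monom_def cp_smult_def fun_eq_iff)

lemma cp_monom_coeff_cp_star:
  assumes "kst 0 = 0"
  shows "cp_monom i (cp_star kst T a i) = cp_star kst T (cp_monom (- i) (a (- i)))"
  unfolding cp_star_cp_monom[where kst = kst, OF assms] by (simp add: cp_star_def)

lemma cp_monom_coeff_cp_mult:
  "cp_monom n (cp_mult T a b n)
     = (\<lambda>m x. \<Sum>i\<in>supp a. cp_mult T (cp_monom i (a i)) (cp_monom (n - i) (b (n - i))) m x)"
  unfolding cp_mult_cp_monom by (auto simp: cp_monom_def cp_mult_def fun_eq_iff)

lemma CP_cp_monom:
  assumes "loc_const f"
  shows "cp_monom i f \<in> CP"
proof -
  have "finite (supp (cp_monom i f))" by (simp add: supp_cp_monom)
  moreover have "loc_const (cp_monom i f n)" for n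
    using assms by (simp add: cp_monom_def loc_const_const)
  ultimately show ?thesis by (simp add: CP_def)
qed

lemma CP_cp_add: "a \<in> CP \<Longrightarrow> b \<in> CP \<Longrightarrow> cp_add a b \<in> CP"
proof -
  assume "a \<in> CP" "b \<in> CP"
  moreover have "supp (cp_add a b) \<subseteq> supp a \<union> supp b"
    by (auto simp: supp_def cp_add_def fun_eq_iff)
  ultimately show ?thesis
    unfolding CP_def cp_add_def by (auto intro: loc_const_compose2 finite_subset)
qed

lemma CP_cp_smult: "a \<in> CP \<Longrightarrow> cp_smult c a \<in> CP"
proof -
  assume "a \<in> CP"
  moreover have "supp (cp_smult c a) \<subseteq> supp a"
    by (auto simp: supp_def cp_smult_def fun_eq_iff)
  ultimately show ?thesis
    unfolding CP_def cp_smult_def by (auto intro: loc_const_compose finite_subset)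
qed

lemma CP_cp_star:
  assumes "kst 0 = 0" and "\<And>k. continuous_on UNIV (Tpow T k)" and "a \<in> CP"
  shows "cp_star kst T a \<in> CP"
proof -
  have "supp (cp_star kst T a) \<subseteq> uminus ` supp a"
  proof
    fix n assume "n \<in> supp (cp_star kst T a)"
    then have "- n \<in> supp a"
      using assms(1) by (auto simp: supp_def cp_star_def fun_eq_iff) metis
    then show "n \<in> uminus ` supp a" by force
  qed
  moreover have "loc_const (cp_star kst T a n)" for n
    using assms(3) loc_const_comp_continuous[OF _ assms(2)] unfolding CP_def cp_star_def
    by (auto intro: loc_const_compose)
  ultimately show ?thesis
    using assms(3) unfolding CP_def by (auto intro: finite_subset)
qed

lemma supp_cp_mult_subset: "supp (cp_mult T a b) \<subseteq> (\<lambda>(i, j). i + j) ` (supp a \<times> supp b)"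
proof
  fix n assume "n \<in> supp (cp_mult T a b)"
  have "\<exists>i\<in>supp a. b (n - i) \<noteq> (\<lambda>_. 0)"
  proof (rule ccontr)
    assume "\<not> (\<exists>i\<in>supp a. b (n - i) \<noteq> (\<lambda>_. 0))"
    then have "cp_mult T a b n = (\<lambda>_. 0)" by (simp add: cp_mult_def)
    with \<open>n \<in> supp (cp_mult T a b)\<close> show False by (simp add: supp_def)
  qed
  then obtain i where "i \<in> supp a" "b (n - i) \<noteq> (\<lambda>_. 0)" by blast
  then have "(i, n - i) \<in> supp a \<times> supp b" by (simp add: supp_def)
  then show "n \<in> (\<lambda>(i, j). i + j) ` (supp a \<times> supp b)" by force
qed

lemma CP_cp_mult:
  assumes "\<And>k. continuous_on UNIV (Tpow T k)" and "a \<in> CP" and "b \<in> CP"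
  shows "cp_mult T a b \<in> CP"
proof -
  have "finite (supp (cp_mult T a b))"
    using supp_cp_mult_subset by (rule finite_subset) (use assms(2,3) in \<open>simp add: CP_def\<close>)
  moreover have "loc_const (\<lambda>x. a i x * b (n - i) (Tpow T (- i) x))" for i n
  proof -
    have "loc_const (\<lambda>x. b (n - i) (Tpow T (- i) x))"
      using assms(3) loc_const_comp_continuous[OF _ assms(1), of "b (n - i)" "- i"]
      by (simp add: CP_def)
    then show ?thesis
      using assms(2) loc_const_compose2[of "a i" _ "(*)"] by (simp add: CP_def)
  qed
  moreover have "finite (supp a)" using assms(2) by (simp add: CP_def)
  ultimately show ?thesis
    unfolding CP_def cp_mult_def by (simp add: loc_const_sum)
qed

lemma gen_alg_zero: "(\<lambda>_ _. 0) \<in> gen_alg kst T G"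
proof -
  have "cp_smult 0 cp_one \<in> gen_alg kst T G" by (intro gen_alg.smult gen_alg.one)
  then show ?thesis by (simp add: cp_smult_def)
qed

lemma gen_alg_sum:
  "finite I \<Longrightarrow> (\<And>i. i \<in> I \<Longrightarrow> g i \<in> gen_alg kst T G) \<Longrightarrow> (\<lambda>n x. \<Sum>i\<in>I. g i n x) \<in> gen_alg kst T G"
proof (induction I rule: finite_induct)
  case (insert j I)
  then have "cp_add (g j) (\<lambda>n x. \<Sum>i\<in>I. g i n x) \<in> gen_alg kst T G"
    by (intro gen_alg.add) auto
  with insert.hyps show ?case by (simp add: cp_add_def)
qed (simp add: gen_alg_zero)

lemma gen_alg_funpow: "a \<in> gen_alg kst T G \<Longrightarrow> (cp_mult T a ^^ n) cp_one \<in> gen_alg kst T G"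
  by (induction n) (simp_all add: gen_alg.one gen_alg.mult)

locale partition_crossed_product =
  fixes T :: "'x::topological_space \<Rightarrow> 'x" and kst :: "'k::field \<Rightarrow> 'k"
    and E :: "'x set" and P :: "'x set set"
  assumes T_homeo: "homeomorphism UNIV UNIV T (inv T)"
    and K_inv: "field_involution kst"
    and P_finite: "finite P"
    and P_clopen: "\<And>Z. Z \<in> P \<Longrightarrow> clopen_set Z"
    and P_disjoint: "\<And>Z Z'. Z \<in> P \<Longrightarrow> Z' \<in> P \<Longrightarrow> Z \<noteq> Z' \<Longrightarrow> Z \<inter> Z' = {}"
    and P_Union: "\<Union>P = - E"
begin

abbreviation W :: "int \<Rightarrow> 'x set" where "W \<equiv> Wset T E"
abbreviation \<B> :: "(int \<Rightarrow> 'x \<Rightarrow> 'k) set" where "\<B> \<equiv> Balg kst T P"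
abbreviation \<B>\<^sub>0 :: "('x \<Rightarrow> 'k) set" where "\<B>\<^sub>0 \<equiv> B0 kst T P"
abbreviation \<B>\<^sub>i :: "int \<Rightarrow> ('x \<Rightarrow> 'k) set" where "\<B>\<^sub>i \<equiv> Bi kst T P E"
abbreviation \<phi> :: "int \<Rightarrow> ('x \<Rightarrow> 'k) \<Rightarrow> 'x \<Rightarrow> 'k" where "\<phi> \<equiv> phi kst T E"
abbreviation s :: "int \<Rightarrow> int \<Rightarrow> 'x \<Rightarrow> 'k" where "s \<equiv> spow kst T E"

lemma bij_T: "bij T"
  using T_homeo unfolding homeomorphism_def by (intro o_bij[of "inv T"]) (auto simp: fun_eq_iff)

lemma continuous_Tpow: "continuous_on UNIV (Tpow T k)"
  using T_homeo by (intro continuous_on_Tpow) (simp_all add: homeomorphism_def)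

lemma kst_0: "kst 0 = 0"
proof -
  have "kst (0 + 0) = kst 0 + kst 0" using K_inv by (simp only: field_involution_def)
  then show ?thesis by (metis add.right_neutral add_left_cancel)
qed

lemma kst_mult: "kst (a * b) = kst a * kst b"
  using K_inv by (simp add: field_involution_def)

lemma kst_indicator [simp]: "kst (indicator S x) = indicator S x"
  using K_inv kst_0 by (simp add: indicator_def field_involution_def)

lemma Balg_gen: "Z \<in> P \<Longrightarrow> cp_monom 1 (indicator Z) \<in> \<B>"
  by (auto simp: Balg_def intro: gen_alg.gen)

lemma Balg_zero: "(\<lambda>_ _. 0) \<in> \<B>"
  by (simp add: Balg_def gen_alg_zero)

lemma Balg_one: "cp_one \<in> \<B>"
  and Balg_add: "a \<in> \<B> \<Longrightarrow> b \<in> \<B> \<Longrightarrow> cp_add a b \<in> \<B>"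
  and Balg_smult: "a \<in> \<B> \<Longrightarrow> cp_smult c a \<in> \<B>"
  and Balg_mult: "a \<in> \<B> \<Longrightarrow> b \<in> \<B> \<Longrightarrow> cp_mult T a b \<in> \<B>"
  and Balg_star: "a \<in> \<B> \<Longrightarrow> cp_star kst T a \<in> \<B>"
  by (simp_all add: Balg_def gen_alg.intros)

lemma sgen_in_Balg: "sgen E \<in> \<B>"
proof -
  have "(\<lambda>n x. \<Sum>Z\<in>P. cp_monom 1 (indicator Z) n x) \<in> \<B>"
    using Balg_gen unfolding Balg_def by (rule gen_alg_sum[OF P_finite])
  moreover have "(\<Sum>Z\<in>P. indicator Z x) = (indicator (- E) x :: 'k)" for x
  proof -
    have "indicator (\<Union>(id ` P)) x = (\<Sum>Z\<in>P. indicator (id Z) x :: 'k)"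
      by (rule indicator_UN_disjoint[OF P_finite]) (auto simp: disjoint_family_on_def P_disjoint)
    then show ?thesis by (simp add: P_Union)
  qed
  then have "(\<lambda>n x. \<Sum>Z\<in>P. cp_monom 1 (indicator Z) n x) = (sgen E :: int \<Rightarrow> 'x \<Rightarrow> 'k)"
    by (simp add: fun_eq_iff sgen_def cp_monom_def)
  ultimately show ?thesis by simp
qed

lemma spow_in_Balg: "s i \<in> \<B>"
  using sgen_in_Balg Balg_star by (simp add: spow_def Balg_def gen_alg_funpow)

lemma indicator_Wset_add:
  "0 \<le> i * j \<Longrightarrow>
    indicator (W i) x * indicator (W j) (Tpow T (- i) x) = (indicator (W (i + j)) x :: 'a::ring_1)"
  by (simp add: indicator_def Wset_add_iff[OF bij_T])

lemma funpow_cp_mult_cp_monom_Wset: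
  "(cp_mult T (cp_monom d (indicator (W d))) ^^ n) cp_one
     = (cp_monom (d * int n) (indicator (W (d * int n))) :: int \<Rightarrow> 'x \<Rightarrow> 'a::field)"
proof (induction n)
  case (Suc n)
  have "0 \<le> d * (d * int n)" by (simp add: mult.assoc[symmetric])
  then have "(\<lambda>x. indicator (W d) x * indicator (W (d * int n)) (Tpow T (- d) x))
      = (indicator (W (d + d * int n)) :: 'x \<Rightarrow> 'a)"
    by (intro ext indicator_Wset_add)
  then show ?case
    using Suc by (simp add: cp_mult_cp_monom algebra_simps)
qed (simp add: cp_one_eq_cp_monom)

lemma spow_eq_cp_monom: "s i = cp_monom i (indicator (W i))"
proof -
  have "indicator (- E) = (indicator (W 1) :: 'x \<Rightarrow> 'k)"
    by (simp add: fun_eq_iff indicator_def mem_Wset_1[OF bij_T])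
  then have sgen_eq: "sgen E = (cp_monom 1 (indicator (W 1)) :: int \<Rightarrow> 'x \<Rightarrow> 'k)"
    by (simp add: sgen_def)
  have "(\<lambda>x. indicator (- E) (T x)) = (indicator (W (- 1)) :: 'x \<Rightarrow> 'k)"
    by (simp add: fun_eq_iff indicator_def mem_Wset_minus_1[OF bij_T])
  then have star_eq: "cp_star kst T (sgen E) = cp_monom (- 1) (indicator (W (- 1)))"
    by (simp add: sgen_def cp_star_cp_monom kst_0)
  show ?thesis
  proof (cases "0 \<le> i")
    case True
    then show ?thesis
      using sgen_eq funpow_cp_mult_cp_monom_Wset[where d = 1 and n = "nat i"]
      by (simp add: spow_def)
  next
    case False
    then show ?thesis
      using star_eq sgen_eq funpow_cp_mult_cp_monom_Wset[where d = "- 1" and n = "nat (- i)"]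
      by (simp add: spow_def)
  qed
qed

lemma indicator_Wset_Tpow: "indicator (W (- i)) (Tpow T (- i) x) = indicator (W i) x"
  by (simp add: indicator_def Tpow_mem_Wset_iff[OF bij_T])

lemma spow_conj:
  "cp_mult T (cp_mult T (s i) (cp_monom 0 b)) (s (- i))
     = cp_monom 0 (\<lambda>x. indicator (W i) x * b (Tpow T (- i) x))"
  unfolding spow_eq_cp_monom cp_mult_cp_monom
  by (intro arg_cong2[where f = cp_monom])
    (simp_all add: fun_eq_iff indicator_Wset_Tpow split: split_indicator)

lemma phi_eq: "\<phi> i b = (\<lambda>x. indicator (W i) x * b (Tpow T (- i) x))"
  unfolding phi_def spow_conj by (simp add: cp_monom_def)

lemma spow_conj_eq_phi: "cp_mult T (cp_mult T (s i) (cp_monom 0 b)) (s (- i)) = cp_monom 0 (\<phi> i b)"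
  by (simp add: spow_conj phi_eq)

lemma mem_B0_iff: "f \<in> \<B>\<^sub>0 \<longleftrightarrow> cp_monom 0 f \<in> \<B>"
  by (simp add: B0_def)

lemma B0_zero: "(\<lambda>_. 0) \<in> \<B>\<^sub>0"
  using Balg_zero by (simp add: mem_B0_iff)

lemma B0_add: "f \<in> \<B>\<^sub>0 \<Longrightarrow> g \<in> \<B>\<^sub>0 \<Longrightarrow> (\<lambda>x. f x + g x) \<in> \<B>\<^sub>0"
  using Balg_add[of "cp_monom 0 f" "cp_monom 0 g"] by (simp add: mem_B0_iff cp_add_cp_monom)

lemma B0_smult: "f \<in> \<B>\<^sub>0 \<Longrightarrow> (\<lambda>x. c * f x) \<in> \<B>\<^sub>0"
  using Balg_smult[of "cp_monom 0 f" c] by (simp add: mem_B0_iff cp_smult_cp_monom)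

lemma B0_mult: "f \<in> \<B>\<^sub>0 \<Longrightarrow> g \<in> \<B>\<^sub>0 \<Longrightarrow> (\<lambda>x. f x * g x) \<in> \<B>\<^sub>0"
  using Balg_mult[of "cp_monom 0 f" "cp_monom 0 g"] by (simp add: mem_B0_iff cp_mult_cp_monom)

lemma B0_fstar: "f \<in> \<B>\<^sub>0 \<Longrightarrow> fstar kst f \<in> \<B>\<^sub>0"
  using Balg_star[of "cp_monom 0 f"] by (simp add: mem_B0_iff cp_star_cp_monom kst_0 fstar_def)

lemma indicator_Wset_in_B0: "indicator (W i) \<in> \<B>\<^sub>0"
proof -
  have "cp_mult T (s i) (s (- i)) = cp_monom 0 (indicator (W i))"
    unfolding spow_eq_cp_monom cp_mult_cp_monom
    by (intro arg_cong2[where f = cp_monom])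
      (simp_all add: fun_eq_iff indicator_Wset_Tpow split: split_indicator)
  then show ?thesis
    using Balg_mult[OF spow_in_Balg spow_in_Balg, of i "- i"] by (simp add: mem_B0_iff)
qed

lemma phi_in_B0: "f \<in> \<B>\<^sub>0 \<Longrightarrow> \<phi> i f \<in> \<B>\<^sub>0"
  unfolding mem_B0_iff spow_conj_eq_phi[symmetric] by (intro Balg_mult spow_in_Balg)

lemma Bi_eq: "\<B>\<^sub>i i = {b \<in> \<B>\<^sub>0. \<forall>x. x \<notin> W i \<longrightarrow> b x = 0}"
proof (intro set_eqI iffI)
  fix b assume "b \<in> \<B>\<^sub>i i"
  then obtain f where "f \<in> \<B>\<^sub>0" and "b = (\<lambda>x. indicator (W i) x * f x)" by (auto simp: Bi_def)
  then show "b \<in> {b \<in> \<B>\<^sub>0. \<forall>x. x \<notin> W i \<longrightarrow> b x = 0}"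
    using B0_mult[OF indicator_Wset_in_B0] by simp
next
  fix b assume "b \<in> {b \<in> \<B>\<^sub>0. \<forall>x. x \<notin> W i \<longrightarrow> b x = 0}"
  then have "b \<in> \<B>\<^sub>0" and "b = (\<lambda>x. indicator (W i) x * b x)"
    by (auto simp: fun_eq_iff split: split_indicator)
  then show "b \<in> \<B>\<^sub>i i" unfolding Bi_def by blast
qed

lemma Balg_induct [consumes 1, case_names gen one add smult mult star]:
  assumes "a \<in> \<B>"
    and "\<And>Z. Z \<in> P \<Longrightarrow> Q (cp_monom 1 (indicator Z))"
    and "Q cp_one"
    and "\<And>a b. a \<in> \<B> \<Longrightarrow> Q a \<Longrightarrow> b \<in> \<B> \<Longrightarrow> Q b \<Longrightarrow> Q (cp_add a b)"
    and "\<And>a c. a \<in> \<B> \<Longrightarrow> Q a \<Longrightarrow> Q (cp_smult c a)"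
    and "\<And>a b. a \<in> \<B> \<Longrightarrow> Q a \<Longrightarrow> b \<in> \<B> \<Longrightarrow> Q b \<Longrightarrow> Q (cp_mult T a b)"
    and "\<And>a. a \<in> \<B> \<Longrightarrow> Q a \<Longrightarrow> Q (cp_star kst T a)"
  shows "Q a"
  using assms(1) unfolding Balg_def
  by (induction rule: gen_alg.induct) (auto simp: Balg_def intro: assms(2-7))

lemma Balg_subset_CP: "a \<in> \<B> \<Longrightarrow> a \<in> CP"
proof (induction rule: Balg_induct)
  case (gen Z)
  then show ?case using P_clopen by (intro CP_cp_monom loc_const_indicator)
next
  case one
  show ?case unfolding cp_one_eq_cp_monom by (intro CP_cp_monom loc_const_const)
qed (simp_all add: CP_cp_add CP_cp_smult CP_cp_mult CP_cp_star continuous_Tpow kst_0)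

lemma Balg_coeff_vanishes:
  assumes "a \<in> \<B>" and "x \<notin> W n"
  shows "a n x = 0"
  using assms
proof (induction arbitrary: n x rule: Balg_induct)
  case (gen Z)
  moreover have "n = 1 \<Longrightarrow> x \<in> E" using gen.prems mem_Wset_1[OF bij_T] by blast
  ultimately show ?case using P_Union by (auto simp: cp_monom_def)
next
  case one
  then show ?case by (auto simp: cp_one_def)
next
  case (mult a b)
  have "a j x * b (n - j) (Tpow T (- j) x) = 0" for j
  proof (rule ccontr)
    assume "a j x * b (n - j) (Tpow T (- j) x) \<noteq> 0"
    then have "x \<in> W j" and "Tpow T (- j) x \<in> W (n - j)" using mult.IH by auto
    then have "x \<in> W (j + (n - j))" by (rule Wset_cocycle[OF bij_T])
    with mult.prems show False by simp
  qed
  then show ?case unfolding cp_mult_def by (intro sum.neutral) blast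
next
  case (star a)
  then have "a (- n) (Tpow T (- n) x) = 0" using Tpow_mem_Wset_iff[OF bij_T] by blast
  then show ?case by (simp add: cp_star_def kst_0)
qed (simp_all add: cp_add_def cp_smult_def)

lemma Balg_homogeneous_component: "a \<in> \<B> \<Longrightarrow> cp_monom n (a n) \<in> \<B>"
proof (induction arbitrary: n rule: Balg_induct)
  case (gen Z)
  then have "cp_monom 1 (indicator Z) \<in> \<B>" by (rule Balg_gen)
  then show ?case using Balg_zero by (simp add: cp_monom_coeff_cp_monom)
next
  case one
  then show ?case
    using Balg_one Balg_zero by (simp add: cp_one_eq_cp_monom cp_monom_coeff_cp_monom)
next
  case (mult a b)
  have "finite (supp a)" using Balg_subset_CP[OF mult.hyps(1)] by (simp add: CP_def)
  with mult.IH show ?case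
    unfolding cp_monom_coeff_cp_mult Balg_def
    by (intro gen_alg_sum gen_alg.mult[folded Balg_def]) simp_all
qed (simp_all add: cp_monom_coeff_cp_add cp_monom_coeff_cp_smult cp_monom_coeff_cp_star kst_0
    Balg_add Balg_smult Balg_star)

lemma cp_monom_mult_spow:
  assumes "\<And>x. x \<notin> W i \<Longrightarrow> b x = 0"
  shows "cp_mult T (cp_monom 0 b) (s i) = cp_monom i b"
  unfolding spow_eq_cp_monom cp_mult_cp_monom
  using assms
  by (intro arg_cong2[where f = cp_monom]) (auto simp: fun_eq_iff split: split_indicator)

lemma cp_monom_mult_spow_uminus:
  assumes "\<And>x. x \<notin> W i \<Longrightarrow> b x = 0"
  shows "cp_mult T (cp_monom i b) (s (- i)) = cp_monom 0 b"
  unfolding spow_eq_cp_monom cp_mult_cp_monom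
  using assms
  by (intro arg_cong2[where f = cp_monom])
    (auto simp: fun_eq_iff indicator_Wset_Tpow split: split_indicator)

lemma mem_Bi_iff_cp_monom: "b \<in> \<B>\<^sub>i i \<longleftrightarrow> cp_monom i b \<in> \<B> \<and> (\<forall>x. x \<notin> W i \<longrightarrow> b x = 0)"
proof
  assume "b \<in> \<B>\<^sub>i i"
  then have "cp_monom 0 b \<in> \<B>" and vanish: "\<forall>x. x \<notin> W i \<longrightarrow> b x = 0"
    by (simp_all add: Bi_eq mem_B0_iff)
  then have "cp_mult T (cp_monom 0 b) (s i) \<in> \<B>" by (intro Balg_mult spow_in_Balg)
  with vanish show "cp_monom i b \<in> \<B> \<and> (\<forall>x. x \<notin> W i \<longrightarrow> b x = 0)"
    by (simp add: cp_monom_mult_spow)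
next
  assume "cp_monom i b \<in> \<B> \<and> (\<forall>x. x \<notin> W i \<longrightarrow> b x = 0)"
  then have "cp_mult T (cp_monom i b) (s (- i)) \<in> \<B>" and vanish: "\<forall>x. x \<notin> W i \<longrightarrow> b x = 0"
    by (simp_all add: Balg_mult spow_in_Balg)
  with vanish show "b \<in> \<B>\<^sub>i i"
    by (simp add: cp_monom_mult_spow_uminus Bi_eq mem_B0_iff)
qed

lemma Balg_coeff_in_Bi: "a \<in> \<B> \<Longrightarrow> a i \<in> \<B>\<^sub>i i"
  by (simp add: mem_Bi_iff_cp_monom Balg_homogeneous_component Balg_coeff_vanishes)

lemma Balg_eq: "\<B> = {a \<in> CP. \<forall>i. a i \<in> \<B>\<^sub>i i}"
proof (intro set_eqI iffI)
  fix a assume "a \<in> {a \<in> CP. \<forall>i. a i \<in> \<B>\<^sub>i i}"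
  then have "finite (supp a)" and "\<forall>i. cp_monom i (a i) \<in> \<B>"
    by (simp_all add: CP_def mem_Bi_iff_cp_monom)
  then have "(\<lambda>n x. \<Sum>i\<in>supp a. cp_monom i (a i) n x) \<in> \<B>"
    unfolding Balg_def by (intro gen_alg_sum) auto
  with \<open>finite (supp a)\<close> show "a \<in> \<B>" by (simp add: sum_cp_monom_coeffs)
qed (simp_all add: Balg_subset_CP Balg_coeff_in_Bi)

lemma Bi_subset_B0: "\<B>\<^sub>i i \<subseteq> \<B>\<^sub>0"
  by (auto simp: Bi_eq)

lemma B0_loc_const:
  assumes "f \<in> \<B>\<^sub>0"
  shows "loc_const f"
proof -
  from assms have "loc_const (cp_monom 0 f 0)" using Balg_subset_CP by (simp add: mem_B0_iff CP_def)
  then show ?thesis by (simp add: cp_monom_def)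
qed

lemma PCP_eq_Balg: "PCP \<B>\<^sub>i = \<B>"
  using Bi_subset_B0 B0_loc_const by (auto simp: Balg_eq PCP_def CP_def)

lemma Bi_cp_monom_mult_spow: "b \<in> \<B>\<^sub>i i \<Longrightarrow> cp_mult T (cp_monom 0 b) (s i) = cp_monom i b"
  by (simp add: Bi_eq cp_monom_mult_spow)

lemma Psi_eq_self: "a \<in> PCP \<B>\<^sub>i \<Longrightarrow> Psi kst T E a = a"
  by (simp add: Psi_def PCP_def Bi_cp_monom_mult_spow sum_cp_monom_coeffs)

lemma sa_ideal_Bi: "sa_ideal kst \<B>\<^sub>0 (\<B>\<^sub>i i)"
  unfolding sa_ideal_def Bi_eq
  by (auto simp: B0_zero B0_add B0_smult B0_mult B0_fstar[unfolded fstar_def] fstar_def kst_0)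

lemma phi_mem_Bi: "b \<in> \<B>\<^sub>i (- i) \<Longrightarrow> \<phi> i b \<in> \<B>\<^sub>i i"
  using phi_in_B0 by (auto simp: Bi_eq phi_eq)

lemma phi_uminus_phi: "b \<in> \<B>\<^sub>i (- i) \<Longrightarrow> \<phi> (- i) (\<phi> i b) = b"
  using Tpow_mem_Wset_iff[OF bij_T, of "- i"]
  by (auto simp: Bi_eq phi_eq fun_eq_iff Tpow_minus_cancel[OF bij_T] split: split_indicator)

lemma star_iso_phi: "star_iso kst (\<B>\<^sub>i (- i)) (\<B>\<^sub>i i) (\<phi> i)"
proof -
  have "bij_betw (\<phi> i) (\<B>\<^sub>i (- i)) (\<B>\<^sub>i i)"
    using phi_mem_Bi phi_uminus_phi phi_mem_Bi[of _ "- i"] phi_uminus_phi[of _ "- i"]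
    by (intro bij_betw_byWitness[where f' = "\<phi> (- i)"]) auto
  then show ?thesis
    by (simp add: star_iso_def phi_eq fstar_def kst_mult fun_eq_iff algebra_simps
        split: split_indicator)
qed

lemma phi_add:
  assumes "f \<in> \<B>\<^sub>i (- m)" and "\<phi> m f \<in> \<B>\<^sub>i (- n)"
  shows "f \<in> \<B>\<^sub>i (- (n + m))" and "\<phi> (n + m) f = \<phi> n (\<phi> m f)"
proof -
  have vanish: "f y = 0" if "y \<notin> W (- (n + m))" for y
  proof (rule ccontr)
    assume "f y \<noteq> 0"
    then have y: "y \<in> W (- m)" using assms(1) by (auto simp: Bi_eq)
    then have "\<phi> m f (Tpow T m y) = f y"
      using Tpow_mem_Wset_iff[OF bij_T, of "- m"] by (simp add: phi_eq Tpow_minus_cancel[OF bij_T])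
    with \<open>f y \<noteq> 0\<close> have "Tpow T (- (- m)) y \<in> W (- n)" using assms(2) by (auto simp: Bi_eq)
    with y have "y \<in> W (- m + - n)" by (rule Wset_cocycle[OF bij_T])
    with that show False by (simp add: add.commute)
  qed
  with assms(1) show "f \<in> \<B>\<^sub>i (- (n + m))" by (simp add: Bi_eq)
  show "\<phi> (n + m) f = \<phi> n (\<phi> m f)"
  proof
    fix x
    define y where "y = Tpow T (- (n + m)) x"
    have y_eq: "Tpow T (- m) (Tpow T (- n) x) = y" and y_shift: "Tpow T m y = Tpow T (- n) x"
      using Tpow_add[OF bij_T, of "- m" "- n" x] Tpow_add[OF bij_T, of m "- (n + m)" x]
      by (simp_all add: y_def add.commute)
    have "x \<in> W (n + m) \<and> x \<in> W n \<and> Tpow T (- n) x \<in> W m" if "f y \<noteq> 0"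
    proof (intro conjI)
      show "x \<in> W (n + m)"
        using vanish[of y] that Tpow_mem_Wset_iff[OF bij_T, of "n + m" x] by (auto simp: y_def)
      have "y \<in> W (- m)" using assms(1) that by (auto simp: Bi_eq)
      then show m: "Tpow T (- n) x \<in> W m"
        using Tpow_mem_Wset_iff[OF bij_T, of "- m" y] y_shift by simp
      then have "\<phi> m f (Tpow T (- n) x) \<noteq> 0" using that by (simp add: phi_eq y_eq)
      then have "Tpow T (- n) x \<in> W (- n)" using assms(2) by (auto simp: Bi_eq)
      then show "x \<in> W n" by (simp add: Tpow_mem_Wset_iff[OF bij_T])
    qed
    then show "\<phi> (n + m) f x = \<phi> n (\<phi> m f) x"
      by (cases "f y = 0") (auto simp: phi_eq y_eq y_def split: split_indicator)
  qed
qed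

lemma partial_action_phi: "partial_action kst \<B>\<^sub>0 \<B>\<^sub>i \<phi>"
  unfolding partial_action_def
proof (intro conjI allI impI ballI)
  show "\<B>\<^sub>i 0 = \<B>\<^sub>0" by (simp add: Bi_eq)
  show "\<phi> 0 f = f" for f by (simp add: phi_eq)
qed (use sa_ideal_Bi star_iso_phi phi_add in blast)+

lemma phi_mult_phi_uminus:
  assumes "b \<in> \<B>\<^sub>i n"
  shows "\<phi> n (\<lambda>y. \<phi> (- n) b y * g y) x = b x * g (Tpow T (- n) x)"
  using assms by (auto simp: phi_eq Bi_eq indicator_Wset_Tpow Tpow_minus_cancel[OF bij_T]
      split: split_indicator)

lemma pcp_mult_eq_cp_mult: "a \<in> PCP \<B>\<^sub>i \<Longrightarrow> pcp_mult \<phi> a b = cp_mult T a b"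
  by (simp add: pcp_mult_def cp_mult_def PCP_def phi_mult_phi_uminus)

lemma pcp_star_eq_cp_star: "a \<in> PCP \<B>\<^sub>i \<Longrightarrow> pcp_star kst \<phi> a = cp_star kst T a"
  by (auto simp: pcp_star_def cp_star_def phi_eq fstar_def PCP_def Bi_eq fun_eq_iff kst_0
      Tpow_mem_Wset_iff[OF bij_T] split: split_indicator)

lemma Psi_bij: "bij_betw (Psi kst T E) (PCP \<B>\<^sub>i) \<B>"
proof -
  have "bij_betw id (PCP \<B>\<^sub>i) \<B>" by (simp add: PCP_eq_Balg)
  then show ?thesis using bij_betw_cong[of "PCP \<B>\<^sub>i" "Psi kst T E" id] Psi_eq_self by simp
qed

lemma Psi_hom:
  assumes "a \<in> PCP \<B>\<^sub>i" and "b \<in> PCP \<B>\<^sub>i"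
  shows "Psi kst T E (cp_add a b) = cp_add (Psi kst T E a) (Psi kst T E b)"
    and "Psi kst T E (pcp_mult \<phi> a b) = cp_mult T (Psi kst T E a) (Psi kst T E b)"
    and "Psi kst T E (cp_smult c a) = cp_smult c (Psi kst T E a)"
    and "Psi kst T E (pcp_star kst \<phi> a) = cp_star kst T (Psi kst T E a)"
  using assms Balg_add Balg_mult Balg_smult Balg_star
  by (simp_all add: Psi_eq_self PCP_eq_Balg pcp_mult_eq_cp_mult pcp_star_eq_cp_star)

end

theorem proposition3p7:
  fixes T :: "'x::metric_space \<Rightarrow> 'x"
    and kst :: "'k::field \<Rightarrow> 'k"
    and E :: "'x set"
    and P :: "'x set set"
  assumes X_compact: "compact (UNIV :: 'x set)"
    and X_tdisc: "totally_disconnected_space TYPE('x)"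
    and T_homeo: "homeomorphism UNIV UNIV T (inv T)"
    and K_inv: "field_involution kst"
    and E_ne: "E \<noteq> {}" and E_clopen: "clopen_set E"
    and P_fin: "finite P"
    and P_sets: "\<forall>Z\<in>P. Z \<noteq> {} \<and> clopen_set Z"
    and P_disj: "\<forall>Z\<in>P. \<forall>Z'\<in>P. Z \<noteq> Z' \<longrightarrow> Z \<inter> Z' = {}"
    and P_union: "\<Union>P = - E"
  shows
    "(\<forall>i. sa_ideal kst (B0 kst T P) (Bi kst T P E i))
     \<and> (\<forall>i. \<forall>b\<in>Bi kst T P E (- i).
           cp_mult T (cp_mult T (spow kst T E i) (cp_monom 0 b)) (spow kst T E (- i)) = cp_monom 0 (phi kst T E i b))
     \<and> (\<forall>i. star_iso kst (Bi kst T P E (- i)) (Bi kst T P E i) (phi kst T E i))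
     \<and> partial_action kst (B0 kst T P) (Bi kst T P E) (phi kst T E)
     \<and> Balg kst T P = {a \<in> CP. \<forall>i. a i \<in> Bi kst T P E i}
     \<and> (\<forall>i. \<forall>b\<in>Bi kst T P E i. cp_mult T (cp_monom 0 b) (spow kst T E i) = cp_monom i b)
     \<and> (\<forall>a\<in>PCP (Bi kst T P E). Psi kst T E a = a)
     \<and> bij_betw (Psi kst T E) (PCP (Bi kst T P E)) (Balg kst T P)
     \<and> (\<forall>a\<in>PCP (Bi kst T P E). \<forall>b\<in>PCP (Bi kst T P E).
           Psi kst T E (cp_add a b) = cp_add (Psi kst T E a) (Psi kst T E b)
         \<and> Psi kst T E (pcp_mult (phi kst T E) a b) = cp_mult T (Psi kst T E a) (Psi kst T E b))
     \<and> (\<forall>c. \<forall>a\<in>PCP (Bi kst T P E). Psi kst T E (cp_smult c a) = cp_smult c (Psi kst T E a))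
     \<and> (\<forall>a\<in>PCP (Bi kst T P E).
           Psi kst T E (pcp_star kst (phi kst T E) a) = cp_star kst T (Psi kst T E a))"
proof -
  interpret partition_crossed_product T kst E P
  proof
    show "\<And>Z. Z \<in> P \<Longrightarrow> clopen_set Z" using P_sets by blast
    show "\<And>Z Z'. Z \<in> P \<Longrightarrow> Z' \<in> P \<Longrightarrow> Z \<noteq> Z' \<Longrightarrow> Z \<inter> Z' = {}" using P_disj by blast
  qed (fact T_homeo K_inv P_fin P_union)+
  show ?thesis
    using sa_ideal_Bi spow_conj_eq_phi star_iso_phi partial_action_phi Balg_eq
      Bi_cp_monom_mult_spow Psi_eq_self Psi_bij Psi_hom
    by blast
qed

end
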